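(* Let $J$ be a finite index set and for each $j\in J$ let $\Lambda_j\subset[0,2]$ be a finite multiset of numbers. Let $G$ and $G_j$ ($j\in J$) be finite simple graphs without isolated vertices such that: (a) $G_j\preccurlyeq_{t'_j} G\preccurlyeq_{t''_j} G_j$ for some $t'_j,t''_j\in\mathbb N_0$, and set $t_j:=t'_j+t''_j$; (b) $\Lambda_j$ has multiplicity $\mu_j$ in the spectrum of the standard Laplacian of $G_j$, with $\mu_j>t_j$; (c) the sets $\Lambda_j$, $j\in J$, are pairwise disjoint; (d) $|G|=\sum_{j\in J}(\mu_j-t_j)\,|\Lambda_j|$ (where $|\Lambda_j|$ counts elements with multiplicity). Then the spectrum of the standard Laplacian of $G$ (as a multiset) equals $\biguplus_{j\in J}\Lambda_j^{(\mu_j-t_j)}$, i.e. each element of $\Lambda_j$ occurring $s$ times in $\Lambda_j$ occurs exactly $s(\mu_j-t_j)$ times in the spectrum of $G$, and there are no other eigenvalues. The same statement holds for the signless standard Laplacians.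
   Context: All graphs are finite, simple, without isolated vertices; $|G|$ is the number of vertices. The standard Laplacian is $(\Delta_G f)(v)=f(v)-\frac{1}{\deg v}\sum_{u\in N_v}f(u)$ and the signless one $(\Delta_{G^+}f)(v)=f(v)+\frac{1}{\deg v}\sum_{u\in N_v}f(u)$ (equivalently the matrices $I\mp D^{-1/2}AD^{-1/2}$); their eigenvalues in ascending order with multiplicity are $\lambda_1(G)\le\dots\le\lambda_{|G|}(G)$, and spectra lie in $[0,2]$. Spectral preorder: $G\preccurlyeq_t G'$ ($t\in\mathbb N_0$) means $|G|\ge|G'|-t$ and $\lambda_k(G)\le\lambda_{k+t}(G')$ for all $1\le k\le|G'|-t$. A multiset $\Lambda$ has multiplicity $\mu$ in a spectrum $\sigma$ if each element of $\Lambda$ having multiplicity $s$ in $\Lambda$ has multiplicity at least $s\mu$ in $\sigma$; this is written $\Lambda^{(\mu)}\subset\sigma$, and $\Lambda^{(\mu)}$ denotes $\Lambda$ with all multiplicities multiplied by $\mu$; $\biguplus$ is the multiset union. *)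

theory Defs
  imports "Jordan_Normal_Form.Char_Poly" "HOL-Library.Multiset"
begin

text \<open>A finite simple graph on vertex set {0..<n}, given as (n, E) with E a symmetric,
irreflexive adjacency relation; no isolated vertices.\<close>
type_synonym graph = "nat \<times> (nat \<Rightarrow> nat \<Rightarrow> bool)"

definition nverts :: "graph \<Rightarrow> nat" where "nverts G = fst G"
definition adj :: "graph \<Rightarrow> nat \<Rightarrow> nat \<Rightarrow> bool" where "adj G = snd G"

definition graph_ok :: "graph \<Rightarrow> bool" where
  "graph_ok G \<longleftrightarrow>
     (\<forall>u v. adj G u v \<longrightarrow> u < nverts G \<and> v < nverts G) \<and>
     (\<forall>u v. adj G u v \<longrightarrow> adj G v u) \<and>
     (\<forall>u. \<not> adj G u u) \<and>
     (\<forall>u < nverts G. \<exists>v. adj G u v)"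

definition deg :: "graph \<Rightarrow> nat \<Rightarrow> nat" where
  "deg G u = card {v. v < nverts G \<and> adj G u v}"

definition lap_mat :: "bool \<Rightarrow> graph \<Rightarrow> real mat" where
  "lap_mat signless G = mat (nverts G) (nverts G) (\<lambda>(i, j).
     (if i = j then 1 else 0) +
     (if signless then 1 else -1) *
       (if adj G i j then 1 / sqrt (real (deg G i) * real (deg G j)) else 0))"

definition spec :: "bool \<Rightarrow> graph \<Rightarrow> real multiset" where
  "spec signless G = (let p = char_poly (lap_mat signless G) in
     (\<Sum>x\<in>{x. poly p x = 0}. replicate_mset (order x p) x))"

definition eig :: "bool \<Rightarrow> graph \<Rightarrow> nat \<Rightarrow> real" where
  "eig signless G k = sorted_list_of_multiset (spec signless G) ! (k - 1)"

definition spec_le :: "bool \<Rightarrow> graph \<Rightarrow> nat \<Rightarrow> graph \<Rightarrow> bool" where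
  "spec_le signless G t G' \<longleftrightarrow>
     int (nverts G) \<ge> int (nverts G') - int t \<and>
     (\<forall>k. 1 \<le> k \<and> int k \<le> int (nverts G') - int t \<longrightarrow>
        eig signless G k \<le> eig signless G' (k + t))"

definition has_mult :: "real multiset \<Rightarrow> nat \<Rightarrow> real multiset \<Rightarrow> bool" where
  "has_mult \<Lambda> \<mu> \<sigma> \<longleftrightarrow> (\<forall>x. count \<Lambda> x * \<mu> \<le> count \<sigma> x)"

end

theory Submission imports Defs begin

text \<open>Laplacians are real symmetric, so their characteristic polynomials split over the
reals and the spectrum of a graph has exactly as many elements as vertices. If an eigenvalue
occupies the positions \<open>a..<b\<close> in the sorted spectrum of \<open>G\<^sub>j\<close>, the two spectral
preorders pin the eigenvalues of \<open>G\<close> at positions \<open>a + t'..<b - t''\<close> to that same value, so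
passing from \<open>G\<^sub>j\<close> to \<open>G\<close> loses at most \<open>t = t' + t''\<close> of its multiplicity; an element of
multiplicity \<open>c \<ge> 1\<close> in \<open>\<Lambda>\<^sub>j\<close> thus occurs at least \<open>c\<mu> - t \<ge> c(\<mu> - t)\<close> times in the
spectrum of \<open>G\<close>. As the \<open>\<Lambda>\<^sub>j\<close> are disjoint, \<open>\<Uplus>\<^sub>j \<Lambda>\<^sub>j\<^bsup>(\<mu>\<^sub>j - t\<^sub>j)\<^esup>\<close> is a
submultiset of the spectrum of \<open>G\<close>, and it has the same size \<open>|G|\<close>.\<close>

lemma sum_replicate_order_roots_eq_proots:
  fixes p :: "'a::idom poly"
  assumes "p \<noteq> 0"
  shows "(\<Sum>x\<in>{x. poly p x = 0}. replicate_mset (order x p) x) = proots p"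
proof (rule multiset_eqI)
  fix y
  have "count (\<Sum>x\<in>{x. poly p x = 0}. replicate_mset (order x p) x) y
      = (\<Sum>x\<in>{x. poly p x = 0}. if x = y then order x p else 0)"
    by (auto simp: count_sum intro!: sum.cong)
  also have "\<dots> = (if poly p y = 0 then order y p else 0)"
    using poly_roots_finite[OF assms] by (simp add: sum.delta')
  also have "\<dots> = count (proots p) y"
    using assms order_0I by auto
  finally show "count (\<Sum>x\<in>{x. poly p x = 0}. replicate_mset (order x p) x) y = count (proots p) y" .
qed

lemma proots_prod_linear_factors:
  fixes bs :: "'a::idom list"
  shows "proots (\<Prod>b\<leftarrow>bs. [:-b, 1:]) = mset bs"
proof (induction bs)
  case (Cons b bs)
  have "proots ([:-b, 1:] * (\<Prod>b\<leftarrow>bs. [:-b, 1:])) = proots [:-b, 1:] + proots (\<Prod>b\<leftarrow>bs. [:-b, 1:])"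
    by (rule proots_mult) (auto simp: prod_list_zero_iff)
  with Cons show ?case by simp
qed simp

lemma eigenvalue_real_of_symmetric:
  fixes A :: "real mat" and a :: complex and w :: "nat \<Rightarrow> complex"
  assumes sym: "\<And>i j. i < n \<Longrightarrow> j < n \<Longrightarrow> A $$ (i, j) = A $$ (j, i)"
    and eigen: "\<And>i. i < n \<Longrightarrow> (\<Sum>j<n. of_real (A $$ (i, j)) * w j) = a * w i"
    and nonzero: "k < n" "w k \<noteq> 0"
  shows "a = of_real (Re a)"
proof -
  define s where "s = (\<Sum>i<n. cnj (w i) * (\<Sum>j<n. of_real (A $$ (i, j)) * w j))"
  define N where "N = (\<Sum>i<n. (cmod (w i))\<^sup>2)"
  have "s = a * (\<Sum>i<n. cnj (w i) * w i)"
    unfolding s_def using eigen by (simp add: sum_distrib_left mult.left_commute)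
  also have "(\<Sum>i<n. cnj (w i) * w i) = of_real N"
    unfolding N_def of_real_sum by (intro sum.cong refl) (metis complex_norm_square mult.commute)
  finally have "s = a * of_real N" .
  moreover have "cnj s = s"
  proof -
    have "cnj s = (\<Sum>i<n. \<Sum>j<n. w i * of_real (A $$ (i, j)) * cnj (w j))"
      unfolding s_def by (simp add: sum_distrib_left mult.assoc)
    also have "\<dots> = (\<Sum>j<n. \<Sum>i<n. w i * of_real (A $$ (i, j)) * cnj (w j))"
      by (rule sum.swap)
    also have "\<dots> = s"
      unfolding s_def sum_distrib_left
      by (intro sum.cong refl) (simp add: sym mult.commute mult.left_commute)
    finally show ?thesis .
  qed
  moreover have "N > 0"
  proof -
    have "(cmod (w k))\<^sup>2 \<le> N"
      unfolding N_def using nonzero(1) by (intro member_le_sum) auto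
    moreover have "(cmod (w k))\<^sup>2 > 0" using nonzero(2) by simp
    ultimately show ?thesis by linarith
  qed
  ultimately have "cnj a = a"
    by (metis complex_cnj_complex_of_real complex_cnj_mult mult_cancel_right of_real_eq_0_iff
        less_irrefl)
  then show ?thesis by (simp add: complex_eq_iff)
qed

lemma char_poly_real_symmetric_splits:
  fixes A :: "real mat"
  assumes A: "A \<in> carrier_mat n n"
    and sym: "\<And>i j. i < n \<Longrightarrow> j < n \<Longrightarrow> A $$ (i, j) = A $$ (j, i)"
  obtains bs where "char_poly A = (\<Prod>b\<leftarrow>bs. [:-b, 1:])" and "length bs = n"
proof -
  define C where "C = map_mat complex_of_real A"
  have C: "C \<in> carrier_mat n n" using A unfolding C_def by simp
  obtain as where char_C: "char_poly C = (\<Prod>a\<leftarrow>as. [:-a, 1:])" and len: "length as = n"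
    using char_poly_factorized[OF C] by blast
  have real: "a = of_real (Re a)" if "a \<in> set as" for a
  proof -
    have "poly (char_poly C) a = 0"
      unfolding char_C using that by (simp add: poly_prod_list prod_list_zero_iff)
    then obtain v where "eigenvector C v a"
      using eigenvalue_root_char_poly[OF C] unfolding eigenvalue_def by blast
    then have v: "v \<in> carrier_vec n" "v \<noteq> 0\<^sub>v n" "C *\<^sub>v v = a \<cdot>\<^sub>v v"
      using C unfolding eigenvector_def by auto
    then obtain k where k: "k < n" "v $ k \<noteq> 0" by force
    show ?thesis
    proof (rule eigenvalue_real_of_symmetric[where w = "\<lambda>i. v $ i", OF sym _ k])
      fix i assume i: "i < n"
      have "(C *\<^sub>v v) $ i = (\<Sum>j<n. of_real (A $$ (i, j)) * v $ j)"
        using v(1) i A unfolding C_def by (simp add: scalar_prod_def lessThan_atLeast0)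
      then show "(\<Sum>j<n. of_real (A $$ (i, j)) * v $ j) = a * v $ i"
        using v i by simp
    qed auto
  qed
  interpret of_real_poly: map_poly_inj_idom_hom complex_of_real ..
  have "map_poly complex_of_real (\<Prod>b\<leftarrow>map Re as. [:-b, 1:]) = (\<Prod>a\<leftarrow>as. [:-a, 1:])"
    using real
  proof (induction as)
    case (Cons a as)
    have "map_poly complex_of_real [:-Re a, 1:] = [:-a, 1:]"
      using Cons.prems[of a] by (simp add: map_poly_pCons)
    moreover have "map_poly complex_of_real (\<Prod>b\<leftarrow>map Re as. [:-b, 1:]) = (\<Prod>a\<leftarrow>as. [:-a, 1:])"
      using Cons by simp
    ultimately show ?case
      using of_real_poly.hom_mult[of "[:-Re a, 1:]" "\<Prod>b\<leftarrow>map Re as. [:-b, 1:]"] by simp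
  qed simp
  also have "\<dots> = map_poly complex_of_real (char_poly A)"
    using char_C of_real_hom.char_poly_hom[OF A, where ?'a = complex] unfolding C_def by metis
  finally have "char_poly A = (\<Prod>b\<leftarrow>map Re as. [:-b, 1:])"
    using of_real_poly.injectivity by metis
  with len show ?thesis by (intro that[of "map Re as"]) simp_all
qed

lemma size_proots_char_poly_real_symmetric:
  fixes A :: "real mat"
  assumes "A \<in> carrier_mat n n"
    and "\<And>i j. i < n \<Longrightarrow> j < n \<Longrightarrow> A $$ (i, j) = A $$ (j, i)"
  shows "size (proots (char_poly A)) = n"
  using char_poly_real_symmetric_splits[OF assms] by (metis proots_prod_linear_factors size_mset)

lemma spec_eq_proots: "spec s G = proots (char_poly (lap_mat s G))"
proof -
  have "lap_mat s G \<in> carrier_mat (nverts G) (nverts G)" by (simp add: lap_mat_def)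
  then have "coeff (char_poly (lap_mat s G)) (nverts G) = 1"
    using degree_monic_char_poly by blast
  then have "char_poly (lap_mat s G) \<noteq> 0" by auto
  then show ?thesis
    unfolding spec_def Let_def by (rule sum_replicate_order_roots_eq_proots)
qed

lemma lap_mat_symmetric:
  assumes "graph_ok G" "i < nverts G" "j < nverts G"
  shows "lap_mat s G $$ (i, j) = lap_mat s G $$ (j, i)"
proof -
  have "adj G i j = adj G j i" using assms(1) unfolding graph_ok_def by blast
  then show ?thesis using assms by (simp add: lap_mat_def mult.commute)
qed

lemma size_spec: "graph_ok G \<Longrightarrow> size (spec s G) = nverts G"
  unfolding spec_eq_proots
  by (rule size_proots_char_poly_real_symmetric, simp add: lap_mat_def, rule lap_mat_symmetric)

lemma length_sorted_list_of_spec: "graph_ok G \<Longrightarrow> length (sorted_list_of_multiset (spec s G)) = nverts G"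
  using size_spec[of G s] by (metis mset_sorted_list_of_multiset size_mset)

lemma count_mset_eq_card_indices: "count (mset xs) x = card {i. i < length xs \<and> xs ! i = x}"
  by (simp add: count_mset count_list_eq_length_filter length_filter_conv_card eq_commute)

lemma sorted_count_block:
  fixes L :: "'a::linorder list"
  assumes "sorted L"
  obtains a b where "\<And>i. a \<le> i \<Longrightarrow> i < length L \<Longrightarrow> x \<le> L ! i"
    and "\<And>i. i < b \<Longrightarrow> L ! i \<le> x"
    and "b \<le> length L" and "count (mset L) x = b - a"
proof
  define a where "a = length (takeWhile (\<lambda>y. y < x) L)"
  define b where "b = length (takeWhile (\<lambda>y. y \<le> x) L)"
  show "b \<le> length L" unfolding b_def by (rule length_takeWhile_le)
  show below: "L ! i \<le> x" if "i < b" for i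
    using that unfolding b_def by (metis nth_mem set_takeWhileD takeWhile_nth)
  show above: "x \<le> L ! i" if "a \<le> i" "i < length L" for i
  proof -
    have "\<not> L ! a < x"
      using that nth_length_takeWhile[of "\<lambda>y. y < x" L] unfolding a_def by simp
    with sorted_nth_mono[OF assms that] show ?thesis by simp
  qed
  have before: "L ! i < x" if "i < a" for i
    using that unfolding a_def by (metis nth_mem set_takeWhileD takeWhile_nth)
  have after: "x < L ! i" if "b \<le> i" "i < length L" for i
  proof -
    have "\<not> L ! b \<le> x"
      using that nth_length_takeWhile[of "\<lambda>y. y \<le> x" L] unfolding b_def by simp
    with sorted_nth_mono[OF assms that] show ?thesis by simp
  qed
  have "{i. i < length L \<and> L ! i = x} = {a..<b}"
  proof (rule Set.set_eqI, rule iffI)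
    fix i assume "i \<in> {i. i < length L \<and> L ! i = x}"
    then have "i < length L" "L ! i = x" by simp_all
    then have "\<not> i < a" "\<not> b \<le> i" using before[of i] after[of i] by auto
    then show "i \<in> {a..<b}" by simp
  next
    fix i assume "i \<in> {a..<b}"
    then have "a \<le> i" "i < b" "i < length L" using \<open>b \<le> length L\<close> by simp_all
    then show "i \<in> {i. i < length L \<and> L ! i = x}" using above below by (simp add: order_antisym)
  qed
  then show "count (mset L) x = b - a"
    by (simp add: count_mset_eq_card_indices)
qed

lemma count_spec_diff_le_of_spec_le:
  assumes "graph_ok G" "graph_ok H"
    and H_G: "spec_le s H t1 G" and G_H: "spec_le s G t2 H"
  shows "count (spec s H) x - (t1 + t2) \<le> count (spec s G) x"
proof -
  define L where "L = sorted_list_of_multiset (spec s H)"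
  define M where "M = sorted_list_of_multiset (spec s G)"
  have len: "length L = nverts H" "length M = nverts G"
    unfolding L_def M_def using assms(1,2) by (simp_all add: length_sorted_list_of_spec)
  have eig: "eig s H k = L ! (k - 1)" "eig s G k = M ! (k - 1)" for k
    unfolding eig_def L_def M_def by simp_all
  have size_bound: "int (nverts G) \<ge> int (nverts H) - int t2"
    using G_H unfolding spec_le_def by blast
  have "sorted L" unfolding L_def by simp
  obtain a b where above: "\<And>i. a \<le> i \<Longrightarrow> i < length L \<Longrightarrow> x \<le> L ! i"
    and below: "\<And>i. i < b \<Longrightarrow> L ! i \<le> x"
    and b: "b \<le> length L" and count_L: "count (mset L) x = b - a"
    using sorted_count_block[OF \<open>sorted L\<close>, of x] by metis
  have M_block: "M ! i = x" if i: "a + t1 \<le> i" "i + t2 < b" for i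
  proof -
    \<comment> \<open>\<open>L ! (i - t1) \<le> M ! i \<le> L ! (i + t2)\<close>, and both bounds lie in the block of \<open>x\<close>\<close>
    have "eig s G (i + 1) \<le> eig s H (i + 1 + t2)"
      using G_H[unfolded spec_le_def, THEN conjunct2, rule_format, of "i + 1"] b len i by auto
    then have upper: "M ! i \<le> x" using below[of "i + t2"] i unfolding eig by simp
    have "eig s H (i + 1 - t1) \<le> eig s G (i + 1 - t1 + t1)"
      using H_G[unfolded spec_le_def, THEN conjunct2, rule_format, of "i + 1 - t1"] size_bound b len i
      by auto
    then have "L ! (i - t1) \<le> M ! i" using i unfolding eig by simp
    moreover have "x \<le> L ! (i - t1)" using i b by (intro above) auto
    ultimately show ?thesis using upper by simp
  qed
  have "{a + t1..<b - t2} \<subseteq> {i. i < length M \<and> M ! i = x}"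
  proof
    fix i assume "i \<in> {a + t1..<b - t2}"
    then have i: "a + t1 \<le> i" "i + t2 < b" by auto
    then have "i < length M" using size_bound b len by linarith
    with M_block[OF i] show "i \<in> {i. i < length M \<and> M ! i = x}" by simp
  qed
  then have "card {a + t1..<b - t2} \<le> count (mset M) x"
    unfolding count_mset_eq_card_indices by (intro card_mono) auto
  with count_L show ?thesis unfolding L_def M_def by simp
qed

lemma has_mult_of_spec_le:
  assumes "graph_ok G" "graph_ok H" "spec_le s H t1 G" "spec_le s G t2 H"
    and mult: "has_mult \<Lambda> \<mu> (spec s H)"
  shows "has_mult \<Lambda> (\<mu> - (t1 + t2)) (spec s G)"
  unfolding has_mult_def
proof
  fix x
  define c where "c = count \<Lambda> x"
  have "c * (\<mu> - (t1 + t2)) \<le> c * \<mu> - (t1 + t2)" if "c \<ge> 1"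
    using that by (simp add: diff_mult_distrib2 diff_le_mono2)
  moreover have "c * \<mu> - (t1 + t2) \<le> count (spec s G) x"
    using mult count_spec_diff_le_of_spec_le[OF assms(1-4), of x]
    unfolding has_mult_def c_def by (meson diff_le_mono le_trans)
  ultimately show "count \<Lambda> x * (\<mu> - (t1 + t2)) \<le> count (spec s G) x"
    unfolding c_def[symmetric] by (cases "c = 0") auto
qed

lemma sum_repeat_mset_subseteq_of_has_mult:
  assumes "finite J"
    and disjoint: "\<And>i j. i \<in> J \<Longrightarrow> j \<in> J \<Longrightarrow> i \<noteq> j \<Longrightarrow> set_mset (\<Lambda> i) \<inter> set_mset (\<Lambda> j) = {}"
    and mult: "\<And>j. j \<in> J \<Longrightarrow> has_mult (\<Lambda> j) (m j) S"
  shows "(\<Sum>j\<in>J. repeat_mset (m j) (\<Lambda> j)) \<subseteq># S"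
proof (rule mset_subset_eqI)
  fix x
  have count_sum: "count (\<Sum>j\<in>J. repeat_mset (m j) (\<Lambda> j)) x = (\<Sum>j\<in>J. count (\<Lambda> j) x * m j)"
    by (simp add: count_sum mult.commute)
  show "count (\<Sum>j\<in>J. repeat_mset (m j) (\<Lambda> j)) x \<le> count S x"
  proof (cases "\<exists>j\<in>J. x \<in># \<Lambda> j")
    case True
    then obtain j0 where j0: "j0 \<in> J" "x \<in># \<Lambda> j0" by blast
    have "x \<notin># \<Lambda> j" if "j \<in> J - {j0}" for j
      using disjoint[of j0 j] j0 that by auto
    then have "(\<Sum>j\<in>J - {j0}. count (\<Lambda> j) x * m j) = 0"
      by (simp add: not_in_iff)
    then have "(\<Sum>j\<in>J. count (\<Lambda> j) x * m j) = count (\<Lambda> j0) x * m j0"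
      using sum.remove[OF assms(1) j0(1), of "\<lambda>j. count (\<Lambda> j) x * m j"] by simp
    then show ?thesis using mult[OF j0(1)] unfolding count_sum has_mult_def by simp
  next
    case False
    then show ?thesis unfolding count_sum by (simp add: not_in_iff)
  qed
qed

theorem mainTheorem2:
  fixes signless :: bool
    and J :: "'j set"
    and \<Lambda> :: "'j \<Rightarrow> real multiset"
    and G :: graph
    and Gs :: "'j \<Rightarrow> graph"
    and t' t'' \<mu> :: "'j \<Rightarrow> nat"
  assumes "finite J"
    and "\<And>j. j \<in> J \<Longrightarrow> set_mset (\<Lambda> j) \<subseteq> {0..2}"
    and "graph_ok G"
    and "\<And>j. j \<in> J \<Longrightarrow> graph_ok (Gs j)"
    and "\<And>j. j \<in> J \<Longrightarrow> spec_le signless (Gs j) (t' j) G \<and> spec_le signless G (t'' j) (Gs j)"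
    and "\<And>j. j \<in> J \<Longrightarrow> has_mult (\<Lambda> j) (\<mu> j) (spec signless (Gs j))"
    and "\<And>j. j \<in> J \<Longrightarrow> \<mu> j > t' j + t'' j"
    and "\<And>i j. i \<in> J \<Longrightarrow> j \<in> J \<Longrightarrow> i \<noteq> j \<Longrightarrow> set_mset (\<Lambda> i) \<inter> set_mset (\<Lambda> j) = {}"
    and "nverts G = (\<Sum>j\<in>J. (\<mu> j - (t' j + t'' j)) * size (\<Lambda> j))"
  shows "spec signless G = (\<Sum>j\<in>J. repeat_mset (\<mu> j - (t' j + t'' j)) (\<Lambda> j))"
proof -
  define R where "R = (\<Sum>j\<in>J. repeat_mset (\<mu> j - (t' j + t'' j)) (\<Lambda> j))"
  have "has_mult (\<Lambda> j) (\<mu> j - (t' j + t'' j)) (spec signless G)" if "j \<in> J" for j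
    using has_mult_of_spec_le[OF assms(3) assms(4)[OF that]] assms(5,6)[OF that] by blast
  then have "R \<subseteq># spec signless G"
    unfolding R_def by (intro sum_repeat_mset_subseteq_of_has_mult assms(1,8))
  moreover have "size R = size (spec signless G)"
    unfolding R_def size_spec[OF assms(3)] assms(9) by simp
  ultimately show ?thesis
    unfolding R_def[symmetric] using mset_subset_size subset_mset.le_imp_less_or_eq by fastforce
qed

end
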